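(* Let $q,q^\dagger\in[1,2]$ and let $s^\dagger,s'$ be real numbers with $s'<s^\dagger-\left(\frac{d}{q^\dagger}-\frac dq\right)_+$, where $x_+=\max\{x,0\}$. Then $B^{s^\dagger,q^\dagger\wedge q,q}(\mathcal Z)$ is continuously embedded in $B^{s',q}(\mathcal Z)$, where $q^\dagger\wedge q=\min\{q^\dagger,q\}$.
   Context: Let $d\ge1$, $\mathcal X\subset\mathbb R^d$ with a fixed basis $\{\phi_\ell\}_{\ell\ge1}$, $\mathcal T\subset[0,T]$ bounded, $\mathcal Z=\mathcal X\times\mathcal T$. Functions on $\mathcal Z$ are identified with sequences of temporal functions via $u(\mathbf x,t)=\sum_{\ell}u_\ell(t)\phi_\ell(\mathbf x)$. For $p\ge1$, $\|u_\ell\|_p$ denotes the $L^p(\mathcal T)$-norm of the temporal coefficient function. For $r,p\ge1$ and $s\in\mathbb R$, let $\tau_r(s)=\frac sd+\frac12-\frac1r$, $\|u\|_{s,r,p}=\big(\sum_\ell \ell^{\tau_r(s)r}\|u_\ell\|_p^r\big)^{1/r}$, $B^{s,r,p}(\mathcal Z)=\{u:\|u\|_{s,r,p}<\infty\}$, and $B^{s,q}(\mathcal Z):=B^{s,q,q}(\mathcal Z)$. *)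

theory Defs
  imports "HOL-Analysis.Analysis"
begin

text \<open>A function u on Z = X x T is identified with the sequence of its temporal
coefficient functions u l, l >= 1 (the value u 0 is irrelevant).\<close>

definition in_Lp :: "real set \<Rightarrow> real \<Rightarrow> (real \<Rightarrow> real) \<Rightarrow> bool" where
  "in_Lp Tset p f \<longleftrightarrow> set_borel_measurable lborel Tset f \<and>
     set_integrable lborel Tset (\<lambda>t. \<bar>f t\<bar> powr p)"

definition Lp_norm :: "real set \<Rightarrow> real \<Rightarrow> (real \<Rightarrow> real) \<Rightarrow> real" where
  "Lp_norm Tset p f = (LINT t:Tset|lborel. \<bar>f t\<bar> powr p) powr (1 / p)"

definition tau :: "nat \<Rightarrow> real \<Rightarrow> real \<Rightarrow> real" where
  "tau d r s = s / real d + 1/2 - 1 / r"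

definition besov_terms :: "nat \<Rightarrow> real set \<Rightarrow> real \<Rightarrow> real \<Rightarrow> real \<Rightarrow> (nat \<Rightarrow> real \<Rightarrow> real) \<Rightarrow> nat \<Rightarrow> real" where
  "besov_terms d Tset s r p u k =
     real (Suc k) powr (tau d r s * r) * (Lp_norm Tset p (u (Suc k))) powr r"

definition besov_norm :: "nat \<Rightarrow> real set \<Rightarrow> real \<Rightarrow> real \<Rightarrow> real \<Rightarrow> (nat \<Rightarrow> real \<Rightarrow> real) \<Rightarrow> real" where
  "besov_norm d Tset s r p u = (\<Sum>k. besov_terms d Tset s r p u k) powr (1 / r)"

definition besov :: "nat \<Rightarrow> real set \<Rightarrow> real \<Rightarrow> real \<Rightarrow> real \<Rightarrow> (nat \<Rightarrow> real \<Rightarrow> real) set" where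
  "besov d Tset s r p = {u. (\<forall>l\<ge>1. in_Lp Tset p (u l)) \<and> summable (besov_terms d Tset s r p u)}"

definition cont_embedded :: "'a set \<Rightarrow> ('a \<Rightarrow> real) \<Rightarrow> 'a set \<Rightarrow> ('a \<Rightarrow> real) \<Rightarrow> bool" where
  "cont_embedded A nA B nB \<longleftrightarrow> A \<subseteq> B \<and> (\<exists>C>0. \<forall>u\<in>A. nB u \<le> C * nA u)"

end

theory Submission
  imports Defs
begin

text \<open>Since the weight exponent \<open>\<tau>\<^sub>q(s')\<close> does not exceed \<open>\<tau>\<^sub>r(s\<^sup>\<dagger>)\<close> for
  \<open>r = q\<^sup>\<dagger> \<and> q\<close>, the weighted coefficient norms \<open>\<ell>\<^bsup>\<tau>\<^esup> \<parallel>u\<^sub>\<ell>\<parallel>\<^sub>q\<close> of the target space are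
  dominated termwise by those of the source space; the claim is then the embedding
  \<open>\<ell>\<^sup>r \<subseteq> \<ell>\<^sup>q\<close> of sequence spaces for \<open>r \<le> q\<close>, with embedding constant 1.\<close>

lemma powr_eq_mult_powr_diff:
  fixes a p :: real
  assumes "a \<ge> 0"
  shows "a powr p = a * a powr (p - 1)"
  using assms by (cases "a = 0") (simp_all add: powr_diff)

lemma summable_powr_and_suminf_powr_le:
  fixes a :: "nat \<Rightarrow> real" and p :: real
  assumes nonneg: "\<And>k. a k \<ge> 0" and "summable a" and "p \<ge> 1"
  shows "summable (\<lambda>k. a k powr p) \<and> (\<Sum>k. a k powr p) \<le> (\<Sum>k. a k) powr p"
proof -
  define S where "S = (\<Sum>k. a k)"
  have "a k \<le> S" for k
    unfolding S_def using sum_le_suminf[OF \<open>summable a\<close>, of "{k}"] nonneg by simp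
  then have "a k * a k powr (p - 1) \<le> a k * S powr (p - 1)" for k
    using nonneg \<open>p \<ge> 1\<close> by (simp add: mult_left_mono powr_mono2)
  then have bound: "a k powr p \<le> a k * S powr (p - 1)" for k
    by (metis powr_eq_mult_powr_diff nonneg)
  have summable_bound: "summable (\<lambda>k. a k * S powr (p - 1))"
    using \<open>summable a\<close> by (rule summable_mult2)
  have summable: "summable (\<lambda>k. a k powr p)"
    by (rule summable_comparison_test[OF _ summable_bound]) (use bound in auto)
  have "(\<Sum>k. a k powr p) \<le> (\<Sum>k. a k * S powr (p - 1))"
    using bound summable summable_bound by (rule suminf_le)
  also have "\<dots> = S * S powr (p - 1)"
    unfolding S_def using \<open>summable a\<close> by (rule suminf_mult2[symmetric])
  also have "\<dots> = S powr p"
    using suminf_nonneg[OF \<open>summable a\<close> nonneg]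
    by (metis S_def powr_eq_mult_powr_diff)
  finally show ?thesis
    using summable by (simp add: S_def)
qed

lemma summable_powr_and_lp_norm_le:
  fixes x :: "nat \<Rightarrow> real" and r q :: real
  assumes nonneg: "\<And>k. x k \<ge> 0" and "0 < r" "r \<le> q"
    and summable_r: "summable (\<lambda>k. x k powr r)"
  shows "summable (\<lambda>k. x k powr q)"
    and "(\<Sum>k. x k powr q) powr (1 / q) \<le> (\<Sum>k. x k powr r) powr (1 / r)"
proof -
  have "q / r \<ge> 1"
    using assms by simp
  have powr_q: "(x k powr r) powr (q / r) = x k powr q" for k
    using \<open>0 < r\<close> by (simp add: powr_powr)
  from summable_powr_and_suminf_powr_le[OF _ summable_r \<open>q / r \<ge> 1\<close>]
  have summable_q: "summable (\<lambda>k. x k powr q)"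
    and le: "(\<Sum>k. x k powr q) \<le> (\<Sum>k. x k powr r) powr (q / r)"
    by (simp_all add: powr_q)
  show "summable (\<lambda>k. x k powr q)"
    by (fact summable_q)
  have "(\<Sum>k. x k powr q) powr (1 / q) \<le> ((\<Sum>k. x k powr r) powr (q / r)) powr (1 / q)"
    using le assms suminf_nonneg[OF summable_q] by (intro powr_mono2) auto
  also have "\<dots> = (\<Sum>k. x k powr r) powr (1 / r)"
    using assms by (simp add: powr_powr)
  finally show "(\<Sum>k. x k powr q) powr (1 / q) \<le> (\<Sum>k. x k powr r) powr (1 / r)" .
qed

definition weighted_Lp_norms :: "real set \<Rightarrow> real \<Rightarrow> real \<Rightarrow> (nat \<Rightarrow> real \<Rightarrow> real) \<Rightarrow> nat \<Rightarrow> real" where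
  "weighted_Lp_norms Tset w p u k = real (Suc k) powr w * Lp_norm Tset p (u (Suc k))"

lemma weighted_Lp_norms_nonneg: "weighted_Lp_norms Tset w p u k \<ge> 0"
  by (simp add: weighted_Lp_norms_def Lp_norm_def)

lemma weighted_Lp_norms_mono:
  "w \<le> w' \<Longrightarrow> weighted_Lp_norms Tset w p u k \<le> weighted_Lp_norms Tset w' p u k"
  unfolding weighted_Lp_norms_def Lp_norm_def by (intro mult_right_mono powr_mono) auto

lemma besov_terms_eq_weighted_Lp_norms_powr:
  "besov_terms d Tset s r p u k = weighted_Lp_norms Tset (tau d r s) p u k powr r"
  unfolding besov_terms_def weighted_Lp_norms_def Lp_norm_def
  by (simp add: powr_mult powr_powr)

lemma tau_le_tau_min:
  fixes d :: nat and q qd sd s' :: real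
  assumes "d \<ge> 1" and "s' \<le> sd - max (real d / qd - real d / q) 0"
  shows "tau d q s' \<le> tau d (min qd q) sd"
proof (cases "qd \<le> q")
  case True
  then have "s' / real d \<le> (sd - real d / qd + real d / q) / real d"
    using assms by (simp add: divide_right_mono)
  also have "\<dots> = sd / real d - 1 / qd + 1 / q"
    using assms by (simp add: field_simps)
  finally show ?thesis
    using True by (simp add: tau_def)
next
  case False
  then show ?thesis
    using assms by (simp add: tau_def divide_right_mono)
qed

lemma besov_terms_summable_and_norm_le:
  assumes "0 < r" "r \<le> q" and "tau d q s' \<le> tau d r s"
    and summable_r: "summable (besov_terms d Tset s r p u)"
  shows "summable (besov_terms d Tset s' q p u)"
    and "besov_norm d Tset s' q p u \<le> besov_norm d Tset s r p u"
proof -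
  define x where "x = weighted_Lp_norms Tset (tau d r s) p u"
  define y where "y = weighted_Lp_norms Tset (tau d q s') p u"
  have y_le_x: "y k powr q \<le> x k powr q" for k
    unfolding x_def y_def using assms
    by (intro powr_mono2 weighted_Lp_norms_mono weighted_Lp_norms_nonneg) auto
  have terms_r: "besov_terms d Tset s r p u = (\<lambda>k. x k powr r)"
    and terms_q: "besov_terms d Tset s' q p u = (\<lambda>k. y k powr q)"
    by (simp_all add: fun_eq_iff x_def y_def besov_terms_eq_weighted_Lp_norms_powr)
  have x_nonneg: "\<And>k. x k \<ge> 0"
    by (simp add: x_def weighted_Lp_norms_nonneg)
  note x_lp = summable_powr_and_lp_norm_le[OF x_nonneg assms(1,2) summable_r[unfolded terms_r]]
  have summable_y: "summable (\<lambda>k. y k powr q)"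
    by (rule summable_comparison_test[OF _ x_lp(1)]) (use y_le_x in auto)
  then show "summable (besov_terms d Tset s' q p u)"
    by (simp add: terms_q)
  have "(\<Sum>k. y k powr q) powr (1 / q) \<le> (\<Sum>k. x k powr q) powr (1 / q)"
    using assms suminf_le[OF y_le_x summable_y x_lp(1)] summable_y
    by (intro powr_mono2) (auto intro: suminf_nonneg)
  also have "\<dots> \<le> (\<Sum>k. x k powr r) powr (1 / r)"
    by (fact x_lp(2))
  finally show "besov_norm d Tset s' q p u \<le> besov_norm d Tset s r p u"
    by (simp add: besov_norm_def terms_r terms_q)
qed

theorem proposition4p1:
  fixes d :: nat and Tset :: "real set" and Tmax q qd sd s' :: real
  assumes "d \<ge> 1"
    and "Tset \<subseteq> {0..Tmax}" and "Tset \<in> sets lborel"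
    and "q \<in> {1..2}" and "qd \<in> {1..2}"
    and "s' < sd - max (real d / qd - real d / q) 0"
  shows "cont_embedded
           (besov d Tset sd (min qd q) q) (besov_norm d Tset sd (min qd q) q)
           (besov d Tset s' q q) (besov_norm d Tset s' q q)"
proof -
  have tau: "tau d q s' \<le> tau d (min qd q) sd"
    using assms(1,6) by (intro tau_le_tau_min) auto
  have "0 < min qd q" "min qd q \<le> q"
    using assms(4,5) by auto
  note embedding = besov_terms_summable_and_norm_le[OF this tau]
  show ?thesis
    unfolding cont_embedded_def
    by (intro conjI exI[of _ 1]) (auto simp: besov_def embedding)
qed

end
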